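(* Let $X,X_1,X_2,\dots$ be i.i.d. positive random variables with $\mathbb{E}X=1$, let $p\ge2$ be an integer, and suppose $\mathbb{P}\{X\ge x\}=o(x^{-p-1})$ as $x\to\infty$. Let $2\le r\le p-1$ and let $\gamma=(\gamma_1,\dots,\gamma_r)$ be positive integers with $\gamma_1+\dots+\gamma_r=p$. With $S_r=X_1+\dots+X_r$, $$\mathbb{E}\frac{X_1^{2\gamma_1}\cdots X_r^{2\gamma_r}}{\left(\frac1nS_r+1\right)^p}=o(n^{p-r-1}\log n)\quad(n\to\infty).$$ *)

theory Defs
  imports "HOL-Probability.Probability" "HOL-Library.Landau_Symbols"
begin

end

theory Submission
  imports Defs
begin

(* Since S_r >= X_i, the integrand is at most prod_i X_i^(2 gamma_i) / (X_i/n + 1)^(gamma_i), so by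
   independence and identical distribution the expectation is at most prod_i a_n(gamma_i), where
   a_n(m) = E X^(2m) / (X/n + 1)^m <= E X^m min(X, n)^m.  The tail hypothesis gives E X^p < oo,
   hence a_n(m) = O(n^((2m - p)_+)).  At most one gamma_i exceeds p/2, so these exponents add up to
   at most p - r - 1, except when r = 2 and one gamma_i equals 1.  In that case the other factor
   E X^(p-1) min(X, n)^(p-1) is split over the dyadic shells x0 2^j <= X < x0 2^(j+1):
   P(X >= x) = o(x^(-p-1)) makes each of the O(log n) shells below n contribute o(n^(p-3)), and
   the shells above n form a geometric series, which gives o(n^(p-3) log n). *)

(* The absolute value only makes it nonnegative everywhere; it is applied to nonnegative x. *)
definition damped_power :: "real \<Rightarrow> nat \<Rightarrow> real \<Rightarrow> real" where
  "damped_power n m x = x ^ (2 * m) / (\<bar>x\<bar> / n + 1) ^ m"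

lemma damped_power_measurable [measurable]: "damped_power n m \<in> borel_measurable borel"
  unfolding damped_power_def by measurable

lemma damped_power_nonneg: "n > 0 \<Longrightarrow> damped_power n m x \<ge> 0"
  unfolding damped_power_def by (simp add: add_pos_nonneg less_imp_le)

lemma prod_power_div_power_sum_le_prod_damped_power:
  fixes x :: "'i \<Rightarrow> real" and g :: "'i \<Rightarrow> nat"
  assumes I: "finite I" and x: "\<And>i. i \<in> I \<Longrightarrow> x i \<ge> 0" and n: "n > 0"
  shows "(\<Prod>i\<in>I. x i ^ (2 * g i)) / ((\<Sum>i\<in>I. x i) / n + 1) ^ (\<Sum>i\<in>I. g i)
           \<le> (\<Prod>i\<in>I. damped_power n (g i) (x i))"
proof -
  have denom_pos: "x i / n + 1 > 0" if "i \<in> I" for i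
    using x[OF that] n by (simp add: add_nonneg_pos)
  have "(\<Prod>i\<in>I. (x i / n + 1) ^ g i) \<le> (\<Prod>i\<in>I. ((\<Sum>i\<in>I. x i) / n + 1) ^ g i)"
  proof (rule prod_mono)
    fix i assume i: "i \<in> I"
    have "x i \<le> (\<Sum>i\<in>I. x i)"
      using I x i by (intro member_le_sum) auto
    then show "0 \<le> (x i / n + 1) ^ g i \<and> (x i / n + 1) ^ g i \<le> ((\<Sum>i\<in>I. x i) / n + 1) ^ g i"
      using denom_pos[OF i] n by (auto intro!: power_mono divide_right_mono)
  qed
  also have "\<dots> = ((\<Sum>i\<in>I. x i) / n + 1) ^ (\<Sum>i\<in>I. g i)"
    by (rule power_sum[symmetric])
  finally have denom_le: "(\<Prod>i\<in>I. (x i / n + 1) ^ g i) \<le> ((\<Sum>i\<in>I. x i) / n + 1) ^ (\<Sum>i\<in>I. g i)" .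
  have "(\<Prod>i\<in>I. (x i / n + 1) ^ g i) > 0"
    using denom_pos by (intro prod_pos zero_less_power) auto
  moreover have "(\<Prod>i\<in>I. x i ^ (2 * g i)) \<ge> 0"
    using x by (intro prod_nonneg) auto
  ultimately have "(\<Prod>i\<in>I. x i ^ (2 * g i)) / ((\<Sum>i\<in>I. x i) / n + 1) ^ (\<Sum>i\<in>I. g i)
                  \<le> (\<Prod>i\<in>I. x i ^ (2 * g i)) / (\<Prod>i\<in>I. (x i / n + 1) ^ g i)"
    using denom_le by (intro divide_left_mono) auto
  also have "\<dots> = (\<Prod>i\<in>I. damped_power n (g i) (x i))"
    using x by (simp add: damped_power_def prod_dividef)
  finally show ?thesis .
qed

lemma damped_power_le_power_mult_min_power:
  assumes x: "x \<ge> 0" and n: "n > 0"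
  shows "damped_power n m x \<le> x ^ m * min x n ^ m"
proof -
  have denom_pos: "x / n + 1 > 0" using x n by (simp add: add_nonneg_pos)
  have "x / (x / n + 1) \<le> min x n"
    using x n denom_pos by (simp add: divide_le_eq field_simps)
  then have "x\<^sup>2 / (x / n + 1) \<le> x * min x n"
    using x by (simp add: power2_eq_square mult_left_mono times_divide_eq_right[symmetric]
                     del: times_divide_eq_right)
  then have "(x\<^sup>2 / (x / n + 1)) ^ m \<le> (x * min x n) ^ m"
    using x denom_pos by (intro power_mono) auto
  then show ?thesis
    using x by (simp add: damped_power_def power_divide power_mult power_mult_distrib)
qed

lemma power_mult_min_power_le:
  fixes x n :: real
  assumes x: "x \<ge> 0" and n: "n \<ge> 1" and m: "m \<le> p"
  shows "x ^ m * min x n ^ m \<le> (1 + x ^ p) * n ^ (2 * m - p)"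
proof (cases "2 * m \<le> p")
  case True
  have "x ^ m * min x n ^ m \<le> x ^ m * x ^ m"
    using x n by (intro mult_left_mono power_mono) auto
  also have "\<dots> = x ^ (2 * m)" by (simp add: power_add[symmetric] mult_2)
  also have "\<dots> \<le> 1 + x ^ p"
  proof (cases "x \<le> 1")
    case True
    then show ?thesis using x by (simp add: power_le_one add_increasing2)
  next
    case False
    then show ?thesis using \<open>2 * m \<le> p\<close> by (simp add: add_increasing power_increasing)
  qed
  finally show ?thesis using True by simp
next
  case False
  have "min x n ^ m = min x n ^ (p - m) * min x n ^ (2 * m - p)"
    using False m by (simp add: power_add[symmetric])
  also have "\<dots> \<le> x ^ (p - m) * n ^ (2 * m - p)"
    using x n by (intro mult_mono power_mono) auto
  finally have "x ^ m * min x n ^ m \<le> x ^ m * (x ^ (p - m) * n ^ (2 * m - p))"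
    using x by (intro mult_left_mono) auto
  also have "\<dots> = x ^ p * n ^ (2 * m - p)"
    using m by (simp add: power_add[symmetric] mult.assoc[symmetric])
  also have "\<dots> \<le> (1 + x ^ p) * n ^ (2 * m - p)"
    using n by (intro mult_right_mono) auto
  finally show ?thesis .
qed

(* The summands 2 * g i - p are natural-number differences, i.e. positive parts. *)
lemma sum_excess_exponents_le:
  fixes \<gamma> :: "'i \<Rightarrow> nat"
  assumes I: "finite I" "card I \<ge> 2" and \<gamma>_pos: "\<And>i. i \<in> I \<Longrightarrow> \<gamma> i > 0"
    and \<gamma>_sum: "(\<Sum>i\<in>I. \<gamma> i) = p"
    and not_exceptional: "\<not> (card I = 2 \<and> (\<exists>i\<in>I. \<gamma> i = 1))"
  shows "(\<Sum>i\<in>I. 2 * \<gamma> i - p) \<le> p - card I - 1"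
proof (cases "\<exists>k\<in>I. p < 2 * \<gamma> k")
  case False
  then have "(\<Sum>i\<in>I. 2 * \<gamma> i - p) = 0" by (intro sum.neutral) auto
  then show ?thesis by simp
next
  case True
  then obtain k where k: "k \<in> I" "p < 2 * \<gamma> k" by blast
  have rest_sum: "(\<Sum>i\<in>I - {k}. \<gamma> i) + \<gamma> k = p"
    using I(1) k(1) \<gamma>_sum by (simp add: sum.remove)
  have "2 * \<gamma> i - p = 0" if "i \<in> I - {k}" for i
  proof -
    have "\<gamma> i \<le> (\<Sum>i\<in>I - {k}. \<gamma> i)" using I(1) that by (intro member_le_sum) auto
    then show ?thesis using rest_sum k(2) by linarith
  qed
  then have "(\<Sum>i\<in>I - {k}. 2 * \<gamma> i - p) = 0" by (intro sum.neutral) blast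
  then have excess: "(\<Sum>i\<in>I. 2 * \<gamma> i - p) = 2 * \<gamma> k - p"
    using I(1) k(1) by (simp add: sum.remove)
  have "(\<Sum>i\<in>I - {k}. 1) \<le> (\<Sum>i\<in>I - {k}. \<gamma> i)"
    using \<gamma>_pos by (intro sum_mono) (simp add: Suc_le_eq)
  then have rest_ge: "card I - 1 \<le> p - \<gamma> k"
    using I(1) k(1) rest_sum by simp
  show ?thesis
  proof (cases "card I = 2")
    case False
    then show ?thesis using excess rest_ge I(2) k(2) by linarith
  next
    case True
    then have "card (I - {k}) = 1" using I(1) k(1) by simp
    then obtain j where j: "I - {k} = {j}" by (rule card_1_singletonE)
    then have "j \<in> I" by blast
    then have "\<gamma> j \<ge> 2"
      using True not_exceptional \<gamma>_pos[of j] by (cases "\<gamma> j = 1") auto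
    then show ?thesis using excess rest_sum j True k(2) by simp
  qed
qed

lemma summable_min_one_div_four_pow:
  fixes n :: real
  shows "summable (\<lambda>j::nat. min 1 (n\<^sup>2 / 4 ^ j))"
proof -
  have "summable (\<lambda>j::nat. n\<^sup>2 * (1 / 4) ^ j)"
    by (intro summable_mult summable_geometric) auto
  then show ?thesis
    by (rule summable_comparison_test') (auto simp: power_one_over)
qed

lemma suminf_min_one_div_four_pow_le:
  fixes n :: real
  assumes n: "n \<ge> 1"
  shows "(\<Sum>j. min 1 (n\<^sup>2 / 4 ^ j)) \<le> log 2 n + 3"
proof -
  define J where "J = nat \<lceil>log 2 n\<rceil>"
  have "log 2 n \<ge> 0" using n by simp
  then have J: "log 2 n \<le> real J" "real J \<le> log 2 n + 1"
    unfolding J_def by linarith+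
  have "n \<le> 2 powr real J"
    using J n by (simp add: log_le_iff)
  then have "n \<le> 2 ^ J" by (simp add: powr_realpow)
  then have "n\<^sup>2 \<le> (2 ^ J)\<^sup>2"
    using n by (intro power_mono) auto
  also have "(2 ^ J)\<^sup>2 = (4::real) ^ J"
    by (simp add: power2_eq_square flip: power_mult_distrib)
  finally have "n\<^sup>2 \<le> 4 ^ J" .
  have "(\<Sum>j. min 1 (n\<^sup>2 / 4 ^ j))
          = (\<Sum>j. min 1 (n\<^sup>2 / 4 ^ (j + J))) + (\<Sum>j<J. min 1 (n\<^sup>2 / 4 ^ j))"
    by (rule suminf_split_initial_segment[OF summable_min_one_div_four_pow])
  also have "(\<Sum>j<J. min 1 (n\<^sup>2 / 4 ^ j)) \<le> J"
    using sum_mono[of "{..<J}" "\<lambda>j. min 1 (n\<^sup>2 / 4 ^ j)" "\<lambda>_. 1"] by simp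
  also have "(\<Sum>j. min 1 (n\<^sup>2 / 4 ^ (j + J))) \<le> (\<Sum>j. (n\<^sup>2 / 4 ^ J) * (1 / 4) ^ j)"
  proof (rule suminf_le)
    show "summable (\<lambda>j. min 1 (n\<^sup>2 / 4 ^ (j + J)))"
      using summable_min_one_div_four_pow[of n] by (subst summable_iff_shift)
    show "summable (\<lambda>j. (n\<^sup>2 / 4 ^ J) * (1 / 4 :: real) ^ j)"
      by (intro summable_mult summable_geometric) auto
  qed (auto simp: power_add power_one_over mult.commute)
  also have "(\<Sum>j. (n\<^sup>2 / 4 ^ J) * (1 / 4 :: real) ^ j) = (n\<^sup>2 / 4 ^ J) * (4 / 3)"
    by (subst suminf_mult) (auto simp: suminf_geometric)
  also have "\<dots> \<le> 4 / 3" using \<open>n\<^sup>2 \<le> 4 ^ J\<close> by (simp add: divide_le_eq)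
  finally show ?thesis using J by simp
qed

lemma dyadic_term_le:
  fixes n x c :: real and k j :: nat
  assumes n: "n \<ge> 1" and x: "x \<ge> 2 ^ j" and c: "c \<ge> 0"
  shows "(2 * x) ^ (k + 2) * min (2 * x) n ^ (k + 2) * (c / x ^ (k + 4))
           \<le> 4 ^ (k + 2) * c * n ^ k * min 1 (n\<^sup>2 / 4 ^ j)"
proof -
  have x_pos: "x > 0"
    using x by (smt (verit) zero_less_power)
  define m where "m = min x n"
  have m: "0 < m" "m \<le> x" "m \<le> n"
    using x_pos n by (auto simp: m_def)
  have "(2 ^ j)\<^sup>2 \<le> x\<^sup>2"
    using x by (intro power_mono) auto
  also have "(2 ^ j)\<^sup>2 = (4::real) ^ j"
    by (simp add: power2_eq_square flip: power_mult_distrib)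
  finally have "4 ^ j \<le> x\<^sup>2" .
  then have ratio_le: "(m / x)\<^sup>2 \<le> min 1 (n\<^sup>2 / 4 ^ j)"
  proof -
    have "(m / x)\<^sup>2 \<le> 1" using m x_pos by (intro power_le_one) auto
    moreover have "m\<^sup>2 / x\<^sup>2 \<le> n\<^sup>2 / 4 ^ j"
      using m \<open>4 ^ j \<le> x\<^sup>2\<close> by (intro frac_le power_mono) auto
    ultimately show ?thesis by (simp add: power_divide)
  qed
  have "(2 * x) * min (2 * x) n \<le> 4 * (x * m)"
    using x_pos n by (auto simp: m_def min_def)
  then have "((2 * x) * min (2 * x) n) ^ (k + 2) \<le> (4 * (x * m)) ^ (k + 2)"
    using x_pos n by (intro power_mono) auto
  then have "(2 * x) ^ (k + 2) * min (2 * x) n ^ (k + 2) * (c / x ^ (k + 4))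
               \<le> (4 * (x * m)) ^ (k + 2) * (c / x ^ (k + 4))"
    using x_pos c by (intro mult_right_mono) (simp_all add: power_mult_distrib)
  also have "\<dots> = 4 ^ (k + 2) * c * m ^ k * (m / x)\<^sup>2"
    using x_pos by (simp add: power_mult_distrib power_add power2_eq_square power4_eq_xxxx field_simps)
  also have "\<dots> \<le> 4 ^ (k + 2) * c * n ^ k * min 1 (n\<^sup>2 / 4 ^ j)"
    using c m ratio_le by (intro mult_mono mult_left_mono power_mono) auto
  finally show ?thesis .
qed

lemma tail_bound_of_smallo:
  fixes f :: "real \<Rightarrow> real"
  assumes "f \<in> o(\<lambda>x. x powr - real q)" and "c > 0"
  obtains x0 where "x0 \<ge> 1" and "\<And>x. x \<ge> x0 \<Longrightarrow> f x \<le> c / x ^ q"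
proof -
  obtain N where N: "\<And>x. x \<ge> N \<Longrightarrow> norm (f x) \<le> c * norm (x powr - real q)"
    using landau_o.smallD[OF assms] by (auto simp: eventually_at_top_linorder)
  show ?thesis
  proof (rule that[of "max N 1"])
    fix x :: real assume x: "x \<ge> max N 1"
    then have "x powr - real q = 1 / x ^ q" by (simp add: powr_minus powr_realpow divide_inverse)
    then show "f x \<le> c / x ^ q" using N[of x] x by simp
  qed simp
qed

lemma eventually_ln_ge_at_top: "eventually (\<lambda>n::nat. B \<le> ln (real n)) at_top"
proof -
  have "filterlim (\<lambda>n::nat. ln (real n)) at_top at_top"
    by (rule filterlim_compose[OF ln_at_top filterlim_real_sequentially])
  then show ?thesis
    unfolding filterlim_at_top by (rule spec)
qed

context prob_space
begin

lemma nn_integral_le_dyadic_tail_sum: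
  fixes Y :: "'a \<Rightarrow> real" and h :: "real \<Rightarrow> ennreal"
  assumes Y [measurable]: "Y \<in> borel_measurable M"
    and Y_nonneg: "\<And>\<omega>. \<omega> \<in> space M \<Longrightarrow> Y \<omega> \<ge> 0"
    and x0: "x0 > 0" and h: "mono_on {0..} h"
  shows "(\<integral>\<^sup>+\<omega>. h (Y \<omega>) \<partial>M)
           \<le> h x0 + (\<Sum>j. h (x0 * 2 ^ Suc j) * emeasure M {\<omega>\<in>space M. Y \<omega> \<ge> x0 * 2 ^ j})"
proof -
  define A where "A j = {\<omega>\<in>space M. Y \<omega> \<ge> x0 * 2 ^ j}" for j :: nat
  have A [measurable]: "A j \<in> sets M" for j
    unfolding A_def by measurable
  have "h (Y \<omega>) \<le> h x0 + (\<Sum>j. h (x0 * 2 ^ Suc j) * indicator (A j) \<omega>)" if \<omega>: "\<omega> \<in> space M" for \<omega>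
  proof (cases "Y \<omega> \<le> x0")
    case True
    then have "h (Y \<omega>) \<le> h x0" using h Y_nonneg[OF \<omega>] x0 by (auto intro: mono_onD)
    then show ?thesis by (simp add: add_increasing2)
  next
    case False
    obtain j where j: "\<not> Y \<omega> \<le> x0 * 2 ^ j" "Y \<omega> \<le> x0 * 2 ^ Suc j"
    proof -
      obtain i where "Y \<omega> / x0 < 2 ^ i" using real_arch_pow[of 2] by auto
      then have "Y \<omega> \<le> x0 * 2 ^ i" using x0 by (simp add: divide_less_eq mult.commute)
      then show ?thesis
        using exists_least_lemma[of "\<lambda>j. Y \<omega> \<le> x0 * 2 ^ j"] False that by auto
    qed
    have "h (Y \<omega>) \<le> h (x0 * 2 ^ Suc j)"
      using h Y_nonneg[OF \<omega>] j(2) x0 by (auto intro: mono_onD)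
    also have "\<dots> = (\<Sum>i\<in>{j}. h (x0 * 2 ^ Suc i) * indicator (A i) \<omega>)"
      using \<omega> j(1) by (simp add: A_def)
    also have "\<dots> \<le> (\<Sum>i. h (x0 * 2 ^ Suc i) * indicator (A i) \<omega>)"
      by (intro sum_le_suminf summableI) auto
    finally show ?thesis by (simp add: add_increasing)
  qed
  then have "(\<integral>\<^sup>+\<omega>. h (Y \<omega>) \<partial>M)
               \<le> (\<integral>\<^sup>+\<omega>. h x0 + (\<Sum>j. h (x0 * 2 ^ Suc j) * indicator (A j) \<omega>) \<partial>M)"
    by (intro nn_integral_mono)
  also have "\<dots> = h x0 + (\<Sum>j. h (x0 * 2 ^ Suc j) * emeasure M (A j))"
    by (simp add: nn_integral_add nn_integral_suminf nn_integral_cmult_indicator emeasure_space_1)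
  finally show ?thesis by (simp add: A_def)
qed

lemma nn_integral_le_of_tail_bound:
  fixes Y :: "'a \<Rightarrow> real" and h :: "real \<Rightarrow> real" and t :: "nat \<Rightarrow> real"
  assumes Y: "Y \<in> borel_measurable M" and Y_nonneg: "\<And>\<omega>. \<omega> \<in> space M \<Longrightarrow> Y \<omega> \<ge> 0"
    and x0: "x0 > 0"
    and tail: "\<And>x. x \<ge> x0 \<Longrightarrow> measure M {\<omega>\<in>space M. Y \<omega> \<ge> x} \<le> c / x ^ q"
    and h_mono: "mono_on {0..} h" and h_nonneg: "\<And>x. x \<ge> 0 \<Longrightarrow> h x \<ge> 0"
    and t: "\<And>j. h (x0 * 2 ^ Suc j) * (c / (x0 * 2 ^ j) ^ q) \<le> t j" and "summable t"
  shows "(\<integral>\<^sup>+\<omega>. h (Y \<omega>) \<partial>M) \<le> ennreal (h x0 + (\<Sum>j. t j))"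
proof -
  have term_le: "ennreal (h (x0 * 2 ^ Suc j)) * emeasure M {\<omega>\<in>space M. Y \<omega> \<ge> x0 * 2 ^ j}
                   \<le> ennreal (t j)" and t_nonneg: "t j \<ge> 0" for j
  proof -
    have tail_j: "measure M {\<omega>\<in>space M. Y \<omega> \<ge> x0 * 2 ^ j} \<le> c / (x0 * 2 ^ j) ^ q"
      using x0 by (intro tail) simp
    then have tail_nonneg: "c / (x0 * 2 ^ j) ^ q \<ge> 0"
      using measure_nonneg order_trans by blast
    have h_j: "h (x0 * 2 ^ Suc j) \<ge> 0" using x0 by (intro h_nonneg) simp
    have "ennreal (h (x0 * 2 ^ Suc j)) * emeasure M {\<omega>\<in>space M. Y \<omega> \<ge> x0 * 2 ^ j}
            \<le> ennreal (h (x0 * 2 ^ Suc j)) * ennreal (c / (x0 * 2 ^ j) ^ q)"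
      using tail_j by (intro mult_left_mono) (auto simp: emeasure_eq_measure ennreal_leI)
    also have "\<dots> \<le> ennreal (t j)"
      using t[of j] h_j tail_nonneg by (simp add: ennreal_mult[symmetric] ennreal_leI)
    finally show "ennreal (h (x0 * 2 ^ Suc j)) * emeasure M {\<omega>\<in>space M. Y \<omega> \<ge> x0 * 2 ^ j}
                    \<le> ennreal (t j)" .
    show "t j \<ge> 0" using t[of j] h_j tail_nonneg by (meson mult_nonneg_nonneg order_trans)
  qed
  have "mono_on {0..} (\<lambda>x. ennreal (h x))"
    using h_mono by (auto simp: mono_on_def intro: ennreal_leI)
  then have "(\<integral>\<^sup>+\<omega>. h (Y \<omega>) \<partial>M)
      \<le> ennreal (h x0) + (\<Sum>j. ennreal (h (x0 * 2 ^ Suc j)) * emeasure M {\<omega>\<in>space M. Y \<omega> \<ge> x0 * 2 ^ j})"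
    using nn_integral_le_dyadic_tail_sum[OF Y Y_nonneg x0] by simp
  also have "\<dots> \<le> ennreal (h x0) + (\<Sum>j. ennreal (t j))"
    by (intro add_left_mono suminf_le term_le summableI)
  also have "\<dots> = ennreal (h x0 + (\<Sum>j. t j))"
    using x0 h_nonneg[of x0] t_nonneg \<open>summable t\<close>
    by (simp add: suminf_ennreal2 suminf_nonneg ennreal_plus)
  finally show ?thesis .
qed

lemma nn_integral_power_le_of_tail:
  fixes Y :: "'a \<Rightarrow> real" and p :: nat
  assumes Y: "Y \<in> borel_measurable M" and Y_nonneg: "\<And>\<omega>. \<omega> \<in> space M \<Longrightarrow> Y \<omega> \<ge> 0"
    and x0: "x0 > 0"
    and tail: "\<And>x. x \<ge> x0 \<Longrightarrow> measure M {\<omega>\<in>space M. Y \<omega> \<ge> x} \<le> c / x ^ (p + 1)"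
  shows "(\<integral>\<^sup>+\<omega>. Y \<omega> ^ p \<partial>M) \<le> ennreal (x0 ^ p + 2 ^ (p + 1) * c / x0)"
proof -
  define t where "t j = (2 ^ p * c / x0) * (1 / 2) ^ j" for j :: nat
  have "(x0 * 2 ^ Suc j) ^ p * (c / (x0 * 2 ^ j) ^ (p + 1)) = t j" for j
    using x0 by (simp add: t_def power_mult_distrib power_one_over field_simps)
  moreover have "summable t"
    unfolding t_def by (intro summable_mult summable_geometric) simp
  moreover have "(\<Sum>j. t j) = 2 ^ (p + 1) * c / x0"
  proof -
    have "(\<Sum>j. t j) = (2 ^ p * c / x0) * 2"
      unfolding t_def by (subst suminf_mult) (auto simp: suminf_geometric)
    then show ?thesis by simp
  qed
  moreover have "mono_on {0..} (\<lambda>y::real. y ^ p)"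
    by (auto intro: mono_onI power_mono)
  ultimately show ?thesis
    using nn_integral_le_of_tail_bound[OF Y Y_nonneg x0 tail, of "\<lambda>y. y ^ p" t] by simp
qed

lemma nn_integral_power_bounded_of_tail_smallo:
  fixes Y :: "'a \<Rightarrow> real" and p :: nat
  assumes Y: "Y \<in> borel_measurable M" and Y_nonneg: "\<And>\<omega>. \<omega> \<in> space M \<Longrightarrow> Y \<omega> \<ge> 0"
    and tail: "(\<lambda>x. measure M {\<omega>\<in>space M. Y \<omega> \<ge> x}) \<in> o(\<lambda>x. x powr - real (p + 1))"
  obtains C where "C \<ge> 0" and "(\<integral>\<^sup>+\<omega>. Y \<omega> ^ p \<partial>M) \<le> ennreal C"
proof -
  obtain x0 where x0: "x0 \<ge> 1" "\<And>x. x \<ge> x0 \<Longrightarrow> measure M {\<omega>\<in>space M. Y \<omega> \<ge> x} \<le> 1 / x ^ (p + 1)"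
    using tail_bound_of_smallo[OF tail, of 1] by auto
  show ?thesis
  proof (rule that)
    show "(\<integral>\<^sup>+\<omega>. Y \<omega> ^ p \<partial>M) \<le> ennreal (x0 ^ p + 2 ^ (p + 1) * 1 / x0)"
      using nn_integral_power_le_of_tail[OF Y Y_nonneg _ x0(2)] x0(1) by simp
  qed (use x0 in simp)
qed

lemma nn_integral_truncated_moment_le:
  fixes Y :: "'a \<Rightarrow> real" and k :: nat and n :: real
  assumes Y: "Y \<in> borel_measurable M" and Y_nonneg: "\<And>\<omega>. \<omega> \<in> space M \<Longrightarrow> Y \<omega> \<ge> 0"
    and x0: "x0 \<ge> 1" and c: "c \<ge> 0"
    and tail: "\<And>x. x \<ge> x0 \<Longrightarrow> measure M {\<omega>\<in>space M. Y \<omega> \<ge> x} \<le> c / x ^ (k + 4)"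
    and n: "n \<ge> 1"
  shows "(\<integral>\<^sup>+\<omega>. Y \<omega> ^ (k + 2) * min (Y \<omega>) n ^ (k + 2) \<partial>M)
           \<le> ennreal (x0 ^ (2 * k + 4) + 4 ^ (k + 2) * c * n ^ k * (log 2 n + 3))"
proof -
  define h where "h y = y ^ (k + 2) * min y n ^ (k + 2)" for y :: real
  define t where "t j = 4 ^ (k + 2) * c * n ^ k * min 1 (n\<^sup>2 / 4 ^ j)" for j :: nat
  have h_mono: "mono_on {0..} h"
    unfolding h_def using n by (intro mono_onI) (auto intro!: mult_mono power_mono simp: min_def)
  have h_nonneg: "h y \<ge> 0" if "y \<ge> 0" for y
    unfolding h_def using that n by simp
  have t: "h (x0 * 2 ^ Suc j) * (c / (x0 * 2 ^ j) ^ (k + 4)) \<le> t j" for j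
  proof -
    have double: "x0 * 2 ^ Suc j = 2 * (x0 * 2 ^ j)" by simp
    show ?thesis
      unfolding h_def t_def double by (rule dyadic_term_le[OF n _ c]) (use x0 in simp)
  qed
  have "summable t"
    unfolding t_def by (intro summable_mult summable_min_one_div_four_pow)
  moreover have "x0 > 0" using x0 by simp
  ultimately have "(\<integral>\<^sup>+\<omega>. h (Y \<omega>) \<partial>M) \<le> ennreal (h x0 + (\<Sum>j. t j))"
    using nn_integral_le_of_tail_bound[OF Y Y_nonneg _ tail h_mono h_nonneg t] by blast
  also have "\<dots> \<le> ennreal (x0 ^ (2 * k + 4) + 4 ^ (k + 2) * c * n ^ k * (log 2 n + 3))"
  proof (intro ennreal_leI add_mono)
    have "h x0 \<le> x0 ^ (k + 2) * x0 ^ (k + 2)"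
      unfolding h_def using x0 n by (intro mult_left_mono power_mono) auto
    also have "\<dots> = x0 ^ ((k + 2) + (k + 2))"
      by (simp only: power_add)
    also have "(k + 2) + (k + 2) = 2 * k + 4"
      by simp
    finally show "h x0 \<le> x0 ^ (2 * k + 4)" .
    have "(\<Sum>j. t j) = 4 ^ (k + 2) * c * n ^ k * (\<Sum>j. min 1 (n\<^sup>2 / 4 ^ j))"
      unfolding t_def by (rule suminf_mult[OF summable_min_one_div_four_pow])
    also have "\<dots> \<le> 4 ^ (k + 2) * c * n ^ k * (log 2 n + 3)"
      using suminf_min_one_div_four_pow_le[OF n] c n by (intro mult_left_mono) auto
    finally show "(\<Sum>j. t j) \<le> 4 ^ (k + 2) * c * n ^ k * (log 2 n + 3)" .
  qed
  finally show ?thesis by (simp add: h_def)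
qed

lemma truncated_moment_eventually_le:
  fixes Y :: "'a \<Rightarrow> real" and k :: nat
  assumes Y: "Y \<in> borel_measurable M" and Y_nonneg: "\<And>\<omega>. \<omega> \<in> space M \<Longrightarrow> Y \<omega> \<ge> 0"
    and tail: "(\<lambda>x. measure M {\<omega>\<in>space M. Y \<omega> \<ge> x}) \<in> o(\<lambda>x. x powr - real (k + 4))"
    and c: "c > 0"
  shows "eventually (\<lambda>n. (\<integral>\<^sup>+\<omega>. Y \<omega> ^ (k + 2) * min (Y \<omega>) (real n) ^ (k + 2) \<partial>M)
                          \<le> ennreal (c * (real n ^ k * ln (real n)))) at_top"
proof -
  \<comment> \<open>With this tail constant the dyadic sum is at most c/2 n^k ln n once ln n >= 3 ln 2.\<close>
  define c' where "c' = c * ln 2 / (4 * 4 ^ (k + 2))"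
  have c': "c' > 0" using c by (simp add: c'_def)
  obtain x0 where x0: "x0 \<ge> 1" "\<And>x. x \<ge> x0 \<Longrightarrow> measure M {\<omega>\<in>space M. Y \<omega> \<ge> x} \<le> c' / x ^ (k + 4)"
    using tail_bound_of_smallo[OF tail c'] by blast
  show ?thesis
    using eventually_ln_ge_at_top[of "max (3 * ln 2) (2 * x0 ^ (2 * k + 4) / c)"] eventually_ge_at_top[of 1]
  proof eventually_elim
    case (elim n)
    define L where "L = ln (real n)"
    have n: "real n \<ge> 1" and n_pow: "real n ^ k \<ge> 1" using elim(2) by simp_all
    have L_nonneg: "L \<ge> 0" using n by (simp add: L_def)
    have "log 2 (real n) + 3 \<le> 2 * L / ln 2"
      using elim(1) by (simp add: L_def log_def field_simps)
    then have "4 ^ (k + 2) * c' * real n ^ k * (log 2 (real n) + 3)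
                 \<le> 4 ^ (k + 2) * c' * real n ^ k * (2 * L / ln 2)"
      using c' n_pow by (intro mult_left_mono) auto
    also have "\<dots> = c / 2 * (real n ^ k * L)"
      by (simp add: c'_def field_simps)
    finally have main_term: "4 ^ (k + 2) * c' * real n ^ k * (log 2 (real n) + 3) \<le> c / 2 * (real n ^ k * L)" .
    have "x0 ^ (2 * k + 4) \<le> c / 2 * L"
      using elim(1) c by (simp add: L_def field_simps)
    also have "\<dots> \<le> c / 2 * (real n ^ k * L)"
      using c mult_right_mono[OF n_pow L_nonneg] by (intro mult_left_mono) auto
    finally have const_term: "x0 ^ (2 * k + 4) \<le> c / 2 * (real n ^ k * L)" .
    have "(\<integral>\<^sup>+\<omega>. Y \<omega> ^ (k + 2) * min (Y \<omega>) (real n) ^ (k + 2) \<partial>M)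
            \<le> ennreal (x0 ^ (2 * k + 4) + 4 ^ (k + 2) * c' * real n ^ k * (log 2 (real n) + 3))"
      using nn_integral_truncated_moment_le[OF Y Y_nonneg x0(1) less_imp_le[OF c'] x0(2) n] .
    also have "\<dots> \<le> ennreal (c * (real n ^ k * L))"
      using main_term const_term by (intro ennreal_leI) simp
    finally show ?case by (simp add: L_def)
  qed
qed

lemma nn_integral_prod_indep_identically_distributed:
  fixes X :: "'i \<Rightarrow> 'a \<Rightarrow> 'b" and f :: "'i \<Rightarrow> 'b \<Rightarrow> ennreal"
  assumes I: "finite I" and indep: "indep_vars (\<lambda>_. N) X I" and Y: "Y \<in> M \<rightarrow>\<^sub>M N"
    and ident: "\<And>i. i \<in> I \<Longrightarrow> distr M N (X i) = distr M N Y"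
    and f: "\<And>i. i \<in> I \<Longrightarrow> f i \<in> borel_measurable N"
  shows "(\<integral>\<^sup>+\<omega>. (\<Prod>i\<in>I. f i (X i \<omega>)) \<partial>M) = (\<Prod>i\<in>I. \<integral>\<^sup>+\<omega>. f i (Y \<omega>) \<partial>M)"
proof -
  have "indep_vars (\<lambda>_. borel) (\<lambda>i \<omega>. f i (X i \<omega>)) I"
    using indep f by (rule indep_vars_compose2)
  then have "(\<integral>\<^sup>+\<omega>. (\<Prod>i\<in>I. f i (X i \<omega>)) \<partial>M) = (\<Prod>i\<in>I. \<integral>\<^sup>+\<omega>. f i (X i \<omega>) \<partial>M)"
    using I by (intro indep_vars_nn_integral) auto
  also have "\<dots> = (\<Prod>i\<in>I. \<integral>\<^sup>+\<omega>. f i (Y \<omega>) \<partial>M)"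
  proof (rule prod.cong)
    fix i assume i: "i \<in> I"
    have X: "X i \<in> M \<rightarrow>\<^sub>M N" using indep i by (auto simp: indep_vars_def)
    have "(\<integral>\<^sup>+\<omega>. f i (X i \<omega>) \<partial>M) = (\<integral>\<^sup>+y. f i y \<partial>distr M N (X i))"
      using X f[OF i] by (simp add: nn_integral_distr)
    also have "\<dots> = (\<integral>\<^sup>+y. f i y \<partial>distr M N Y)"
      using ident[OF i] by simp
    also have "\<dots> = (\<integral>\<^sup>+\<omega>. f i (Y \<omega>) \<partial>M)"
      using Y f[OF i] by (simp add: nn_integral_distr)
    finally show "(\<integral>\<^sup>+\<omega>. f i (X i \<omega>) \<partial>M) = (\<integral>\<^sup>+\<omega>. f i (Y \<omega>) \<partial>M)" .
  qed rule
  finally show ?thesis .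
qed

lemma nn_integral_ratio_le_prod_damped_power:
  fixes X :: "'i \<Rightarrow> 'a \<Rightarrow> real" and g :: "'i \<Rightarrow> nat"
  assumes I: "finite I" and indep: "indep_vars (\<lambda>_. borel) X I" and Y: "Y \<in> borel_measurable M"
    and ident: "\<And>i. i \<in> I \<Longrightarrow> distr M borel (X i) = distr M borel Y"
    and X_nonneg: "\<And>i \<omega>. i \<in> I \<Longrightarrow> \<omega> \<in> space M \<Longrightarrow> X i \<omega> \<ge> 0" and n: "n > 0"
  shows "(\<integral>\<^sup>+\<omega>. (\<Prod>i\<in>I. X i \<omega> ^ (2 * g i)) / ((\<Sum>i\<in>I. X i \<omega>) / n + 1) ^ (\<Sum>i\<in>I. g i) \<partial>M)
           \<le> (\<Prod>i\<in>I. \<integral>\<^sup>+\<omega>. damped_power n (g i) (Y \<omega>) \<partial>M)"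
proof -
  have "(\<integral>\<^sup>+\<omega>. (\<Prod>i\<in>I. X i \<omega> ^ (2 * g i)) / ((\<Sum>i\<in>I. X i \<omega>) / n + 1) ^ (\<Sum>i\<in>I. g i) \<partial>M)
          \<le> (\<integral>\<^sup>+\<omega>. (\<Prod>i\<in>I. ennreal (damped_power n (g i) (X i \<omega>))) \<partial>M)"
  proof (rule nn_integral_mono)
    fix \<omega> assume "\<omega> \<in> space M"
    then show "ennreal ((\<Prod>i\<in>I. X i \<omega> ^ (2 * g i)) / ((\<Sum>i\<in>I. X i \<omega>) / n + 1) ^ (\<Sum>i\<in>I. g i))
                 \<le> (\<Prod>i\<in>I. ennreal (damped_power n (g i) (X i \<omega>)))"
      using prod_power_div_power_sum_le_prod_damped_power[OF I _ n, of "\<lambda>i. X i \<omega>" g] X_nonneg n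
      by (simp add: prod_ennreal damped_power_nonneg ennreal_leI)
  qed
  also have "\<dots> = (\<Prod>i\<in>I. \<integral>\<^sup>+\<omega>. damped_power n (g i) (Y \<omega>) \<partial>M)"
    using ident by (intro nn_integral_prod_indep_identically_distributed[OF I indep Y]) auto
  finally show ?thesis .
qed

lemma abs_expectation_ratio_le:
  fixes X :: "'i \<Rightarrow> 'a \<Rightarrow> real" and g :: "'i \<Rightarrow> nat"
  assumes I: "finite I" and indep: "indep_vars (\<lambda>_. borel) X I" and Y: "Y \<in> borel_measurable M"
    and ident: "\<And>i. i \<in> I \<Longrightarrow> distr M borel (X i) = distr M borel Y"
    and X_nonneg: "\<And>i \<omega>. i \<in> I \<Longrightarrow> \<omega> \<in> space M \<Longrightarrow> X i \<omega> \<ge> 0" and n: "n > 0"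
    and bound: "(\<Prod>i\<in>I. \<integral>\<^sup>+\<omega>. damped_power n (g i) (Y \<omega>) \<partial>M) \<le> ennreal B" and B: "B \<ge> 0"
  shows "\<bar>expectation (\<lambda>\<omega>. (\<Prod>i\<in>I. X i \<omega> ^ (2 * g i)) / ((\<Sum>i\<in>I. X i \<omega>) / n + 1) ^ (\<Sum>i\<in>I. g i))\<bar>
           \<le> B"
proof -
  have "expectation (\<lambda>\<omega>. (\<Prod>i\<in>I. X i \<omega> ^ (2 * g i)) / ((\<Sum>i\<in>I. X i \<omega>) / n + 1) ^ (\<Sum>i\<in>I. g i)) \<le> B"
    using nn_integral_ratio_le_prod_damped_power[OF I indep Y ident X_nonneg n] bound B
    by (intro integral_real_bounded) (auto intro: order_trans)
  moreover have "expectation (\<lambda>\<omega>. (\<Prod>i\<in>I. X i \<omega> ^ (2 * g i)) / ((\<Sum>i\<in>I. X i \<omega>) / n + 1) ^ (\<Sum>i\<in>I. g i)) \<ge> 0"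
    using X_nonneg n
    by (intro integral_nonneg_AE AE_I2 divide_nonneg_nonneg prod_nonneg zero_le_power
                   add_nonneg_nonneg sum_nonneg) auto
  ultimately show ?thesis by simp
qed

lemma nn_integral_damped_power_le:
  fixes Y :: "'a \<Rightarrow> real" and n C :: real
  assumes Y: "Y \<in> borel_measurable M" and Y_nonneg: "\<And>\<omega>. \<omega> \<in> space M \<Longrightarrow> Y \<omega> \<ge> 0"
    and moment: "(\<integral>\<^sup>+\<omega>. Y \<omega> ^ p \<partial>M) \<le> ennreal C" and C: "C \<ge> 0"
    and n: "n \<ge> 1" and m: "m \<le> p"
  shows "(\<integral>\<^sup>+\<omega>. damped_power n m (Y \<omega>) \<partial>M) \<le> ennreal ((1 + C) * n ^ (2 * m - p))"
proof -
  have "(\<integral>\<^sup>+\<omega>. damped_power n m (Y \<omega>) \<partial>M)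
          \<le> (\<integral>\<^sup>+\<omega>. ennreal (n ^ (2 * m - p)) * (1 + ennreal (Y \<omega> ^ p)) \<partial>M)"
  proof (rule nn_integral_mono)
    fix \<omega> assume \<omega>: "\<omega> \<in> space M"
    have "damped_power n m (Y \<omega>) \<le> Y \<omega> ^ m * min (Y \<omega>) n ^ m"
      using Y_nonneg[OF \<omega>] n by (intro damped_power_le_power_mult_min_power) auto
    also have "\<dots> \<le> (1 + Y \<omega> ^ p) * n ^ (2 * m - p)"
      using Y_nonneg[OF \<omega>] n m by (rule power_mult_min_power_le)
    finally have "ennreal (damped_power n m (Y \<omega>)) \<le> ennreal ((1 + Y \<omega> ^ p) * n ^ (2 * m - p))"
      by (rule ennreal_leI)
    also have "\<dots> = ennreal (n ^ (2 * m - p)) * (1 + ennreal (Y \<omega> ^ p))"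
      using Y_nonneg[OF \<omega>] n by (simp add: ennreal_mult mult.commute)
    finally show "ennreal (damped_power n m (Y \<omega>)) \<le> ennreal (n ^ (2 * m - p)) * (1 + ennreal (Y \<omega> ^ p))" .
  qed
  also have "\<dots> = ennreal (n ^ (2 * m - p)) * (1 + (\<integral>\<^sup>+\<omega>. Y \<omega> ^ p \<partial>M))"
    using Y by (simp add: nn_integral_cmult nn_integral_add emeasure_space_1)
  also have "\<dots> \<le> ennreal (n ^ (2 * m - p)) * (1 + ennreal C)"
    using moment by (intro mult_left_mono add_left_mono) auto
  also have "\<dots> = ennreal ((1 + C) * n ^ (2 * m - p))"
    using C n by (simp add: ennreal_mult mult.commute)
  finally show ?thesis .
qed

lemma prod_nn_integral_damped_power_le:
  fixes Y :: "'a \<Rightarrow> real" and \<gamma> :: "'i \<Rightarrow> nat" and n C :: real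
  assumes Y: "Y \<in> borel_measurable M" and Y_nonneg: "\<And>\<omega>. \<omega> \<in> space M \<Longrightarrow> Y \<omega> \<ge> 0"
    and moment: "(\<integral>\<^sup>+\<omega>. Y \<omega> ^ p \<partial>M) \<le> ennreal C" and C: "C \<ge> 0" and n: "n \<ge> 1"
    and I: "finite I" "card I \<ge> 2" and \<gamma>_pos: "\<And>i. i \<in> I \<Longrightarrow> \<gamma> i > 0"
    and \<gamma>_sum: "(\<Sum>i\<in>I. \<gamma> i) = p"
    and not_exceptional: "\<not> (card I = 2 \<and> (\<exists>i\<in>I. \<gamma> i = 1))"
  shows "(\<Prod>i\<in>I. \<integral>\<^sup>+\<omega>. damped_power n (\<gamma> i) (Y \<omega>) \<partial>M)
           \<le> ennreal ((1 + C) ^ card I * n ^ (p - card I - 1))"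
proof -
  have "(\<Prod>i\<in>I. \<integral>\<^sup>+\<omega>. damped_power n (\<gamma> i) (Y \<omega>) \<partial>M)
          \<le> (\<Prod>i\<in>I. ennreal ((1 + C) * n ^ (2 * \<gamma> i - p)))"
  proof (rule prod_mono_ennreal)
    fix i assume "i \<in> I"
    then have "\<gamma> i \<le> p" using I(1) \<gamma>_sum member_le_sum[of i I \<gamma>] by simp
    then show "(\<integral>\<^sup>+\<omega>. damped_power n (\<gamma> i) (Y \<omega>) \<partial>M) \<le> ennreal ((1 + C) * n ^ (2 * \<gamma> i - p))"
      using nn_integral_damped_power_le[OF Y Y_nonneg moment C n] by simp
  qed
  also have "\<dots> = ennreal ((1 + C) ^ card I * n ^ (\<Sum>i\<in>I. 2 * \<gamma> i - p))"
    using C n by (simp add: prod_ennreal prod.distrib power_sum)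
  also have "\<dots> \<le> ennreal ((1 + C) ^ card I * n ^ (p - card I - 1))"
    using sum_excess_exponents_le[OF I \<gamma>_pos \<gamma>_sum not_exceptional] C n
    by (intro ennreal_leI mult_left_mono power_increasing) auto
  finally show ?thesis .
qed

lemma prod_nn_integral_damped_power_nonexceptional_eventually_le:
  fixes Y :: "'a \<Rightarrow> real" and \<gamma> :: "'i \<Rightarrow> nat" and C :: real
  assumes Y: "Y \<in> borel_measurable M" and Y_nonneg: "\<And>\<omega>. \<omega> \<in> space M \<Longrightarrow> Y \<omega> \<ge> 0"
    and moment: "(\<integral>\<^sup>+\<omega>. Y \<omega> ^ p \<partial>M) \<le> ennreal C" and C: "C \<ge> 0"
    and I: "finite I" "card I \<ge> 2" and \<gamma>_pos: "\<And>i. i \<in> I \<Longrightarrow> \<gamma> i > 0"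
    and \<gamma>_sum: "(\<Sum>i\<in>I. \<gamma> i) = p"
    and not_exceptional: "\<not> (card I = 2 \<and> (\<exists>i\<in>I. \<gamma> i = 1))"
    and c: "c > 0"
  shows "eventually (\<lambda>n. (\<Prod>i\<in>I. \<integral>\<^sup>+\<omega>. damped_power (real n) (\<gamma> i) (Y \<omega>) \<partial>M)
                          \<le> ennreal (c * (real n ^ (p - card I - 1) * ln (real n)))) at_top"
  using eventually_ln_ge_at_top[of "(1 + C) ^ card I / c"] eventually_ge_at_top[of 1]
proof eventually_elim
  case (elim n)
  have "(1 + C) ^ card I \<le> c * ln (real n)"
    using elim(1) c by (simp add: pos_divide_le_eq mult.commute)
  then have "(1 + C) ^ card I * real n ^ (p - card I - 1) \<le> c * ln (real n) * real n ^ (p - card I - 1)"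
    by (rule mult_right_mono) simp
  then have "ennreal ((1 + C) ^ card I * real n ^ (p - card I - 1))
               \<le> ennreal (c * (real n ^ (p - card I - 1) * ln (real n)))"
    by (intro ennreal_leI) (simp add: mult_ac)
  with elim(2) show ?case
    using prod_nn_integral_damped_power_le[OF Y Y_nonneg moment C _ I \<gamma>_pos \<gamma>_sum not_exceptional, of "real n"]
    by simp
qed

lemma prod_nn_integral_damped_power_exceptional_eventually_le:
  fixes Y :: "'a \<Rightarrow> real" and \<gamma> :: "'i \<Rightarrow> nat" and C :: real
  assumes Y: "Y \<in> borel_measurable M" and Y_nonneg: "\<And>\<omega>. \<omega> \<in> space M \<Longrightarrow> Y \<omega> \<ge> 0"
    and moment: "(\<integral>\<^sup>+\<omega>. Y \<omega> ^ p \<partial>M) \<le> ennreal C" and C: "C \<ge> 0"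
    and tail: "(\<lambda>x. measure M {\<omega>\<in>space M. Y \<omega> \<ge> x}) \<in> o(\<lambda>x. x powr - real (p + 1))"
    and p: "p \<ge> 3" and I: "card I = 2" and i: "i \<in> I" "\<gamma> i = 1" and \<gamma>_sum: "(\<Sum>i\<in>I. \<gamma> i) = p"
    and c: "c > 0"
  shows "eventually (\<lambda>n. (\<Prod>i\<in>I. \<integral>\<^sup>+\<omega>. damped_power (real n) (\<gamma> i) (Y \<omega>) \<partial>M)
                          \<le> ennreal (c * (real n ^ (p - 3) * ln (real n)))) at_top"
proof -
  obtain k where k: "p = k + 3"
    using le_Suc_ex[OF p] by (auto simp: add.commute)
  have "card (I - {i}) = 1" using I i by simp
  then obtain j where j: "I - {i} = {j}" by (rule card_1_singletonE)
  then have I_eq: "I = {i, j}" and "j \<noteq> i" using i by auto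
  then have \<gamma>_j: "\<gamma> j = k + 2" using \<gamma>_sum i k by simp
  have "p + 1 = k + 4" using k by simp
  with tail have tail_k: "(\<lambda>x. measure M {\<omega>\<in>space M. Y \<omega> \<ge> x}) \<in> o(\<lambda>x. x powr - real (k + 4))"
    by (simp only:)
  have "c / (1 + C) > 0" using c C by simp
  then have "eventually (\<lambda>n. (\<integral>\<^sup>+\<omega>. Y \<omega> ^ (k + 2) * min (Y \<omega>) (real n) ^ (k + 2) \<partial>M)
                          \<le> ennreal (c / (1 + C) * (real n ^ k * ln (real n)))) at_top"
    using truncated_moment_eventually_le[OF Y Y_nonneg tail_k] by blast
  then show ?thesis using eventually_ge_at_top[of 1]
  proof eventually_elim
    case (elim n)
    have first: "(\<integral>\<^sup>+\<omega>. damped_power (real n) 1 (Y \<omega>) \<partial>M) \<le> ennreal (1 + C)"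
      using nn_integral_damped_power_le[OF Y Y_nonneg moment C, of "real n" 1] elim(2) k by simp
    have "(\<integral>\<^sup>+\<omega>. damped_power (real n) (k + 2) (Y \<omega>) \<partial>M)
            \<le> (\<integral>\<^sup>+\<omega>. Y \<omega> ^ (k + 2) * min (Y \<omega>) (real n) ^ (k + 2) \<partial>M)"
      using Y_nonneg elim(2)
      by (intro nn_integral_mono ennreal_leI damped_power_le_power_mult_min_power) auto
    also note elim(1)
    finally have second: "(\<integral>\<^sup>+\<omega>. damped_power (real n) (k + 2) (Y \<omega>) \<partial>M)
                            \<le> ennreal (c / (1 + C) * (real n ^ k * ln (real n)))" .
    have "(\<Prod>i\<in>I. \<integral>\<^sup>+\<omega>. damped_power (real n) (\<gamma> i) (Y \<omega>) \<partial>M)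
            = (\<integral>\<^sup>+\<omega>. damped_power (real n) 1 (Y \<omega>) \<partial>M)
              * (\<integral>\<^sup>+\<omega>. damped_power (real n) (k + 2) (Y \<omega>) \<partial>M)"
      using I_eq \<open>j \<noteq> i\<close> i \<gamma>_j by simp
    also have "\<dots> \<le> ennreal (1 + C) * ennreal (c / (1 + C) * (real n ^ k * ln (real n)))"
      using first second by (rule mult_mono) simp_all
    also have "\<dots> = ennreal ((1 + C) * (c / (1 + C) * (real n ^ k * ln (real n))))"
      using C c elim(2) by (intro ennreal_mult[symmetric]) auto
    also have "\<dots> = ennreal (c * (real n ^ k * ln (real n)))"
      using C by simp
    finally show ?case by (simp add: k)
  qed
qed

lemma prod_nn_integral_damped_power_eventually_le:
  fixes Y :: "'a \<Rightarrow> real" and \<gamma> :: "'i \<Rightarrow> nat"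
  assumes Y: "Y \<in> borel_measurable M" and Y_nonneg: "\<And>\<omega>. \<omega> \<in> space M \<Longrightarrow> Y \<omega> \<ge> 0"
    and tail: "(\<lambda>x. measure M {\<omega>\<in>space M. Y \<omega> \<ge> x}) \<in> o(\<lambda>x. x powr - real (p + 1))"
    and I: "finite I" "card I \<ge> 2" "card I \<le> p - 1" and \<gamma>_pos: "\<And>i. i \<in> I \<Longrightarrow> \<gamma> i > 0"
    and \<gamma>_sum: "(\<Sum>i\<in>I. \<gamma> i) = p" and c: "c > 0"
  shows "eventually (\<lambda>n. (\<Prod>i\<in>I. \<integral>\<^sup>+\<omega>. damped_power (real n) (\<gamma> i) (Y \<omega>) \<partial>M)
                          \<le> ennreal (c * (real n ^ (p - card I - 1) * ln (real n)))) at_top"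
proof -
  obtain C where C: "C \<ge> 0" "(\<integral>\<^sup>+\<omega>. Y \<omega> ^ p \<partial>M) \<le> ennreal C"
    using nn_integral_power_bounded_of_tail_smallo[OF Y Y_nonneg tail] by blast
  show ?thesis
  proof (cases "card I = 2 \<and> (\<exists>i\<in>I. \<gamma> i = 1)")
    case True
    then obtain i where "i \<in> I" "\<gamma> i = 1" by blast
    with True I show ?thesis
      using prod_nn_integral_damped_power_exceptional_eventually_le[OF Y Y_nonneg C(2) C(1) tail _ _ _ _ \<gamma>_sum c]
      by simp
  next
    case False
    then show ?thesis
      using prod_nn_integral_damped_power_nonexceptional_eventually_le[OF Y Y_nonneg C(2) C(1) I(1,2) \<gamma>_pos \<gamma>_sum _ c]
      by simp
  qed
qed

end

theorem lemma6:
  fixes M :: "'a measure" and X :: "nat \<Rightarrow> 'a \<Rightarrow> real"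
    and p r :: nat and \<gamma> :: "nat \<Rightarrow> nat"
  assumes "prob_space M"
    and rv: "\<And>i. X i \<in> borel_measurable M"
    and indep: "prob_space.indep_vars M (\<lambda>_. borel) X UNIV"
    and ident: "\<And>i. distr M borel (X i) = distr M borel (X 0)"
    and pos: "\<And>i \<omega>. \<omega> \<in> space M \<Longrightarrow> X i \<omega> > 0"
    and int: "integrable M (X 0)"
    and mean: "prob_space.expectation M (X 0) = 1"
    and p: "p \<ge> 2"
    and tail: "(\<lambda>x::real. measure M {\<omega> \<in> space M. X 0 \<omega> \<ge> x})
                 \<in> o[at_top](\<lambda>x. x powr (- real (p + 1)))"
    and r: "2 \<le> r" "r \<le> p - 1"
    and \<gamma>pos: "\<And>i. i \<in> {1..r} \<Longrightarrow> \<gamma> i > 0"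
    and \<gamma>sum: "(\<Sum>i=1..r. \<gamma> i) = p"
  shows "(\<lambda>n::nat. prob_space.expectation M
            (\<lambda>\<omega>. (\<Prod>i=1..r. X i \<omega> ^ (2 * \<gamma> i))
                  / ((\<Sum>i=1..r. X i \<omega>) / real n + 1) ^ p))
         \<in> o[at_top](\<lambda>n. real n ^ (p - r - 1) * ln (real n))"
proof -
  interpret prob_space M by fact
  have X_nonneg: "\<And>i \<omega>. \<omega> \<in> space M \<Longrightarrow> X i \<omega> \<ge> 0"
    using pos less_imp_le by blast
  have indep_r: "indep_vars (\<lambda>_. borel) X {1..r}"
    by (rule indep_vars_subset[OF indep]) simp
  define E where "E n = expectation (\<lambda>\<omega>. (\<Prod>i=1..r. X i \<omega> ^ (2 * \<gamma> i))
                                        / ((\<Sum>i=1..r. X i \<omega>) / real n + 1) ^ p)" for n :: nat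
  have "E \<in> o(\<lambda>n. real n ^ (p - r - 1) * ln (real n))"
  proof (rule landau_o.smallI)
    fix c :: real assume c: "c > 0"
    have "eventually (\<lambda>n. (\<Prod>i\<in>{1..r}. \<integral>\<^sup>+\<omega>. damped_power (real n) (\<gamma> i) (X 0 \<omega>) \<partial>M)
                            \<le> ennreal (c * (real n ^ (p - r - 1) * ln (real n)))) at_top"
      using prod_nn_integral_damped_power_eventually_le[OF rv X_nonneg tail _ _ _ \<gamma>pos \<gamma>sum c] r
      by simp
    then show "eventually (\<lambda>n. norm (E n) \<le> c * norm (real n ^ (p - r - 1) * ln (real n))) at_top"
      using eventually_ge_at_top[of 1]
    proof eventually_elim
      case (elim n)
      have "c * (real n ^ (p - r - 1) * ln (real n)) \<ge> 0" using c elim(2) by simp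
      then have "\<bar>E n\<bar> \<le> c * (real n ^ (p - r - 1) * ln (real n))"
        unfolding E_def
        using abs_expectation_ratio_le[OF _ indep_r rv ident X_nonneg _ elim(1)] \<gamma>sum elim(2)
        by simp
      then show ?case using elim by (simp add: abs_mult)
    qed
  qed
  then show ?thesis
    unfolding E_def[abs_def] .
qed

end
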